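(* The set $\mathcal{IFR}$ of relay rules (Relay Introduction, Relay Fusion, Relay Reversal) preserves weak connectivity: if any rule of $\mathcal{IFR}$ is applied to a weakly connected (valid) relay graph $G$, then the resulting relay graph $G'$ is also weakly connected.
   Context: Relay model. There is a set $P$ of processes. Each process owns a set of relays (owned non-transferably). Every relay $r$ has exactly one outgoing connection: either $r$ is a sink relay (its messages are delivered to its owning process) or its outgoing connection points to another relay. Following outgoing connections from any relay never cycles and ends at a unique sink relay; the owner of that sink relay is called the sink process of $r$. A process $u$ "has a relay $r$ to" a process $v$ if $u$ owns $r$ (or a message in transit to $u$ will give it such a relay upon receipt) and $v$ is the sink process of $r$. $\mathrm{incoming}(r)$ is the number of connections into $r$ (relays pointing to $r$, including pending ones created by references to $r$ in transit); $\mathrm{same\text{-}target}(r,r')$ holds iff $r$ and $r'$ have the same outgoing target. A process may at any time create a new sink relay with no incoming connections. When a process $u$ sends (a reference to) a relay $s$ it owns via a relay $r$ it owns, the message travels along the chain of relays starting at $r$; upon receipt, the sink process of $r$ obtains a new relay $s'$ whose outgoing connection points to $s$ (so $\mathrm{incoming}(s)$ increases). Deleting a relay removes it and its outgoing connection (after pending messages have been delivered). Merging relays with the same target and no incoming connections replaces them by a single relay with that target. Relay graph: directed graph with vertex set $P\cup R$ ($R$ the set of relays) and edges: $(v,r)$ if process $v$ owns relay $r$; $(r,w)$ for relays $r,w$ if the outgoing connection of $r$ points to $w$; $(r,w)$ for a sink relay $r$ and its owning process $w$ (explicit edges); and an implicit edge $(r,w)$ between relays if a message waiting in $r$'s outgoing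 buffer contains a reference to $w$. Weak connectivity refers to the underlying undirected graph. Rules $\mathcal{IFR}$: (Relay Introduction) if $u$ has a relay $r$ to $v$ and a relay $s$ to $w$, then $u$ may send $s$ to $v$ via $r$ (keeping all relays). (Relay Fusion) if $u$ has two relays $r,r'$ with $\mathrm{same\text{-}target}(r,r')$, $u$ may merge them. (Relay Reversal) if $u$ has two relays $r\neq s$ with $\mathrm{incoming}(r)=0$, $u$ may send $s$ via $r$ and subsequently delete $r$. *)

theory Defs
  imports Main
begin

text \<open>Processes have type 'p, relays type 'r.
  procs = P, rels = R, own r = owning process of r,
  out r = None if r is a sink relay, Some w if the outgoing connection of r points to relay w,
  buf r = references to relays contained in the messages waiting in r's outgoing buffer.\<close>

record ('p, 'r) rstate =
  procs :: "'p set"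
  rels  :: "'r set"
  own   :: "'r \<Rightarrow> 'p"
  out   :: "'r \<Rightarrow> 'r option"
  buf   :: "'r \<Rightarrow> 'r list"

definition chain :: "('p, 'r) rstate \<Rightarrow> ('r \<times> 'r) set" where
  "chain G = {(r, w). r \<in> rels G \<and> out G r = Some w}"

definition valid :: "('p, 'r) rstate \<Rightarrow> bool" where
  "valid G \<longleftrightarrow> finite (rels G) \<and> own G ` rels G \<subseteq> procs G
     \<and> (\<forall>r\<in>rels G. \<forall>w. out G r = Some w \<longrightarrow> w \<in> rels G)
     \<and> (\<forall>r\<in>rels G. set (buf G r) \<subseteq> rels G)
     \<and> acyclic (chain G)"

text \<open>incoming r: connections into r, including pending ones (references to r in transit).\<close>
definition incoming :: "('p, 'r) rstate \<Rightarrow> 'r \<Rightarrow> nat" where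
  "incoming G r = card {w \<in> rels G. out G w = Some r}
     + (\<Sum>w\<in>rels G. length (filter (\<lambda>x. x = r) (buf G w)))"

definition sink_process :: "('p, 'r) rstate \<Rightarrow> 'r \<Rightarrow> 'p \<Rightarrow> bool" where
  "sink_process G r v \<longleftrightarrow> (\<exists>w. (r, w) \<in> (chain G)\<^sup>* \<and> w \<in> rels G \<and> out G w = None \<and> own G w = v)"

definition relay_to :: "('p, 'r) rstate \<Rightarrow> 'p \<Rightarrow> 'r \<Rightarrow> 'p \<Rightarrow> bool" where
  "relay_to G u r v \<longleftrightarrow> r \<in> rels G \<and> own G r = u \<and> sink_process G r v"

definition same_target :: "('p, 'r) rstate \<Rightarrow> 'r \<Rightarrow> 'r \<Rightarrow> bool" where
  "same_target G r r' \<longleftrightarrow> out G r = out G r' \<and> (out G r = None \<longrightarrow> own G r = own G r')"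

definition vertices :: "('p, 'r) rstate \<Rightarrow> ('p + 'r) set" where
  "vertices G = Inl ` procs G \<union> Inr ` rels G"

definition edges :: "('p, 'r) rstate \<Rightarrow> (('p + 'r) \<times> ('p + 'r)) set" where
  "edges G =
      {(Inl (own G r), Inr r) | r. r \<in> rels G}
    \<union> {(Inr r, Inr w) | r w. r \<in> rels G \<and> out G r = Some w}
    \<union> {(Inr r, Inl (own G r)) | r. r \<in> rels G \<and> out G r = None}
    \<union> {(Inr r, Inr w) | r w. r \<in> rels G \<and> w \<in> set (buf G r)}"

definition weakly_connected :: "('p, 'r) rstate \<Rightarrow> bool" where
  "weakly_connected G \<longleftrightarrow>
     (\<forall>a\<in>vertices G. \<forall>b\<in>vertices G.
        (a, b) \<in> ((edges G \<union> (edges G)\<inverse>) \<inter> (vertices G \<times> vertices G))\<^sup>*)"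

definition intro_step :: "('p, 'r) rstate \<Rightarrow> ('p, 'r) rstate \<Rightarrow> bool" where
  "intro_step G G' \<longleftrightarrow> (\<exists>u r s v w. relay_to G u r v \<and> relay_to G u s w \<and>
      G' = G\<lparr>buf := (buf G)(r := buf G r @ [s])\<rparr>)"

definition fusion_step :: "('p, 'r) rstate \<Rightarrow> ('p, 'r) rstate \<Rightarrow> bool" where
  "fusion_step G G' \<longleftrightarrow> (\<exists>u r r'. r \<in> rels G \<and> r' \<in> rels G \<and> r \<noteq> r' \<and>
      own G r = u \<and> own G r' = u \<and> same_target G r r' \<and>
      incoming G r = 0 \<and> incoming G r' = 0 \<and>
      G' = G\<lparr>rels := rels G - {r'}, buf := (buf G)(r := buf G r @ buf G r', r' := [])\<rparr>)"

text \<open>Relay Reversal: u has r \<noteq> s with incoming r = 0; u sends s via r and then deletes r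
  after the pending messages of r (including the new one) have been delivered out of r:
  if r points to x they are passed on to x's outgoing buffer; if r is a sink relay they are
  delivered to u, which obtains, for each referenced relay t, a fresh relay pointing to t.\<close>
definition reversal_step :: "('p, 'r) rstate \<Rightarrow> ('p, 'r) rstate \<Rightarrow> bool" where
  "reversal_step G G' \<longleftrightarrow> (\<exists>u r s. r \<in> rels G \<and> s \<in> rels G \<and> r \<noteq> s \<and>
      own G r = u \<and> own G s = u \<and> incoming G r = 0 \<and>
      (let ms = buf G r @ [s] in
        (case out G r of
           Some x \<Rightarrow> G' = G\<lparr>rels := rels G - {r},
                              buf := (buf G)(x := buf G x @ ms, r := [])\<rparr>
         | None \<Rightarrow> (\<exists>ns. distinct ns \<and> length ns = length ms \<and> set ns \<inter> rels G = {} \<and>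
              G' = G\<lparr>rels := (rels G - {r}) \<union> set ns,
                     own := (\<lambda>q. if q \<in> set ns then u else own G q),
                     out := out G ++ map_of (zip ns ms),
                     buf := (\<lambda>q. if q \<in> set ns \<or> q = r then [] else buf G q)\<rparr>))))"

definition IFR_step :: "('p, 'r) rstate \<Rightarrow> ('p, 'r) rstate \<Rightarrow> bool" where
  "IFR_step G G' \<longleftrightarrow> intro_step G G' \<or> fusion_step G G' \<or> reversal_step G G'"

end

(* Every rule deletes at most one relay r, and r has no incoming connections, so the only
   edges at Inr r are its owner edge and its own outgoing edges. Contract Inr r onto a
   surviving neighbour (the fused partner, the forwarding target, or the owning process)
   and fix every other vertex: each edge of G becomes a path in G', and every new vertex of
   G' is adjacent to the image, so weak connectivity carries over. *)
theory Submission
  imports Defs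
begin

definition undirected_edges :: "('p, 'r) rstate \<Rightarrow> (('p + 'r) \<times> ('p + 'r)) set" where
  "undirected_edges G = (edges G \<union> (edges G)\<inverse>) \<inter> (vertices G \<times> vertices G)"

abbreviation linked :: "('p, 'r) rstate \<Rightarrow> 'p + 'r \<Rightarrow> 'p + 'r \<Rightarrow> bool" where
  "linked G a b \<equiv> (a, b) \<in> (undirected_edges G)\<^sup>*"

lemma weakly_connected_iff_linked:
  "weakly_connected G \<longleftrightarrow> (\<forall>a\<in>vertices G. \<forall>b\<in>vertices G. linked G a b)"
  unfolding weakly_connected_def undirected_edges_def ..

lemma sym_undirected_edges: "sym (undirected_edges G)"
  unfolding undirected_edges_def sym_def by blast

lemma linked_sym: "linked G a b \<Longrightarrow> linked G b a"
  using sym_rtrancl[OF sym_undirected_edges] by (blast dest: symD)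

lemma edge_linked:
  "(a, b) \<in> edges G \<Longrightarrow> a \<in> vertices G \<Longrightarrow> b \<in> vertices G \<Longrightarrow> linked G a b"
  unfolding undirected_edges_def by blast

lemma edge_linked_rev:
  "(a, b) \<in> edges G \<Longrightarrow> a \<in> vertices G \<Longrightarrow> b \<in> vertices G \<Longrightarrow> linked G b a"
  unfolding undirected_edges_def by blast

lemma vertices_iff [simp]:
  "Inl p \<in> vertices G \<longleftrightarrow> p \<in> procs G"
  "Inr q \<in> vertices G \<longleftrightarrow> q \<in> rels G"
  unfolding vertices_def by auto

lemma edgesE [consumes 1, case_names owner connection sink pending]:
  assumes "(a, b) \<in> edges G"
  obtains (owner) q where "q \<in> rels G" "a = Inl (own G q)" "b = Inr q"
  | (connection) q w where "q \<in> rels G" "out G q = Some w" "a = Inr q" "b = Inr w"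
  | (sink) q where "q \<in> rels G" "out G q = None" "a = Inr q" "b = Inl (own G q)"
  | (pending) q w where "q \<in> rels G" "w \<in> set (buf G q)" "a = Inr q" "b = Inr w"
  using assms unfolding edges_def by blast

lemma owner_edge: "q \<in> rels G \<Longrightarrow> (Inl (own G q), Inr q) \<in> edges G"
  unfolding edges_def by blast

lemma connection_edge: "q \<in> rels G \<Longrightarrow> out G q = Some w \<Longrightarrow> (Inr q, Inr w) \<in> edges G"
  unfolding edges_def by blast

lemma rtrancl_connected_transfer:
  assumes conn: "\<forall>a\<in>A. \<forall>b\<in>A. (a, b) \<in> R\<^sup>*"
    and step: "\<And>a b. (a, b) \<in> R \<Longrightarrow> (f a, f b) \<in> S\<^sup>*"
    and "sym S"
    and cover: "\<And>c. c \<in> B \<Longrightarrow> \<exists>a\<in>A. (c, f a) \<in> S\<^sup>*"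
  shows "\<forall>c\<in>B. \<forall>d\<in>B. (c, d) \<in> S\<^sup>*"
proof (intro ballI)
  fix c d assume "c \<in> B" "d \<in> B"
  then obtain a b where "a \<in> A" "b \<in> A" and ca: "(c, f a) \<in> S\<^sup>*" and db: "(d, f b) \<in> S\<^sup>*"
    using cover by blast
  have "(f x, f y) \<in> S\<^sup>*" if "(x, y) \<in> R\<^sup>*" for x y
    using that by induction (auto intro: rtrancl_trans step)
  then have "(f a, f b) \<in> S\<^sup>*"
    using conn \<open>a \<in> A\<close> \<open>b \<in> A\<close> by blast
  moreover have "(f b, d) \<in> S\<^sup>*"
    using db sym_rtrancl[OF \<open>sym S\<close>] by (blast dest: symD)
  ultimately show "(c, d) \<in> S\<^sup>*"
    using ca by (meson rtrancl_trans)
qed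

lemma weakly_connected_transfer:
  assumes "weakly_connected G"
    and edge: "\<And>a b. (a, b) \<in> edges G \<Longrightarrow> a \<in> vertices G \<Longrightarrow> b \<in> vertices G \<Longrightarrow> linked G' (f a) (f b)"
    and cover: "\<And>c. c \<in> vertices G' \<Longrightarrow> \<exists>a\<in>vertices G. linked G' c (f a)"
  shows "weakly_connected G'"
  unfolding weakly_connected_iff_linked
proof (rule rtrancl_connected_transfer[OF _ _ sym_undirected_edges cover])
  show "\<forall>a\<in>vertices G. \<forall>b\<in>vertices G. linked G a b"
    using assms(1) unfolding weakly_connected_iff_linked .
  show "linked G' (f a) (f b)" if "(a, b) \<in> undirected_edges G" for a b
    using that edge linked_sym unfolding undirected_edges_def by blast
qed

lemma incoming_eq_0_iff:
  assumes "finite (rels G)"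
  shows "incoming G r = 0 \<longleftrightarrow> (\<forall>q\<in>rels G. out G q \<noteq> Some r \<and> r \<notin> set (buf G q))"
  using assms by (auto simp: incoming_def filter_empty_conv)

lemma valid_incoming_0D:
  assumes "valid G" "incoming G r = 0" "q \<in> rels G"
  shows "out G q \<noteq> Some r" "r \<notin> set (buf G q)"
  using assms incoming_eq_0_iff[of G r] unfolding valid_def by auto

lemma intro_step_weakly_connected:
  assumes "weakly_connected G" "intro_step G G'"
  shows "weakly_connected G'"
proof -
  obtain r s where G': "G' = G\<lparr>buf := (buf G)(r := buf G r @ [s])\<rparr>"
    using assms(2) unfolding intro_step_def by blast
  have "vertices G' = vertices G" "edges G \<subseteq> edges G'"
    unfolding G' vertices_def edges_def by auto
  then show ?thesis
    by (intro weakly_connected_transfer[where f = id, OF assms(1)]) (auto intro: edge_linked)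
qed

lemma fusion_step_weakly_connected:
  fixes G G' :: "('p, 'r) rstate"
  assumes "valid G" "weakly_connected G" "fusion_step G G'"
  shows "weakly_connected G'"
proof -
  obtain r r' where r: "r \<in> rels G" and "r' \<in> rels G" "r \<noteq> r'" and "own G r' = own G r"
    and "same_target G r r'" and "incoming G r' = 0"
    and G': "G' = G\<lparr>rels := rels G - {r'}, buf := (buf G)(r := buf G r @ buf G r', r' := [])\<rparr>"
    using assms(3) unfolding fusion_step_def by metis
  note no_in = valid_incoming_0D[OF assms(1) \<open>incoming G r' = 0\<close>]
  define f :: "'p + 'r \<Rightarrow> 'p + 'r" where "f y = (if y = Inr r' then Inr r else y)" for y
  show ?thesis
  proof (rule weakly_connected_transfer[where f = f, OF assms(2)])
    fix a b assume "(a, b) \<in> edges G" "a \<in> vertices G" "b \<in> vertices G"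
    then have "(f a, f b) \<in> edges G' \<and> f a \<in> vertices G' \<and> f b \<in> vertices G'"
    proof (cases rule: edgesE)
      case (owner q)
      then show ?thesis
        using \<open>own G r' = own G r\<close> r \<open>r \<noteq> r'\<close> \<open>a \<in> vertices G\<close>
        by (auto simp: f_def G' edges_def vertices_def)
    next
      case (connection q w)
      then show ?thesis
        using no_in[of q] \<open>same_target G r r'\<close> r \<open>r \<noteq> r'\<close> \<open>b \<in> vertices G\<close>
        by (auto simp: f_def G' edges_def vertices_def same_target_def)
    next
      case (sink q)
      then show ?thesis
        using \<open>own G r' = own G r\<close> \<open>same_target G r r'\<close> r \<open>r \<noteq> r'\<close> \<open>b \<in> vertices G\<close>
        by (auto simp: f_def G' edges_def vertices_def same_target_def)
    next
      case (pending q w)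
      then show ?thesis
        using no_in[of q] r \<open>r \<noteq> r'\<close> \<open>b \<in> vertices G\<close>
        by (auto simp: f_def G' edges_def vertices_def)
    qed
    then show "linked G' (f a) (f b)"
      by (blast intro: edge_linked)
  next
    fix c assume "c \<in> vertices G'"
    then have "c \<in> vertices G" "f c = c"
      unfolding G' vertices_def f_def by auto
    then show "\<exists>a\<in>vertices G. linked G' c (f a)"
      by (metis rtrancl_refl)
  qed
qed

lemma reversal_forward_weakly_connected:
  fixes G G' :: "('p, 'r) rstate"
  assumes "valid G" "weakly_connected G"
    and r: "r \<in> rels G" and s: "s \<in> rels G" "r \<noteq> s" "own G s = own G r"
    and "incoming G r = 0" and x: "out G r = Some x"
    and G': "G' = G\<lparr>rels := rels G - {r}, buf := (buf G)(x := buf G x @ (buf G r @ [s]), r := [])\<rparr>"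
  shows "weakly_connected G'"
proof -
  note no_in = valid_incoming_0D[OF assms(1) \<open>incoming G r = 0\<close>]
  have "(r, x) \<in> chain G"
    using r x unfolding chain_def by simp
  then have "x \<noteq> r"
    using assms(1) unfolding valid_def acyclic_def by auto
  have "x \<in> rels G" "own G r \<in> procs G"
    using assms(1) r x unfolding valid_def by auto
  have owner_x: "linked G' (Inl (own G r)) (Inr x)"
  proof -
    have "linked G' (Inl (own G r)) (Inr s)"
      using s \<open>own G r \<in> procs G\<close> by (intro edge_linked) (auto simp: G' edges_def)
    moreover have "linked G' (Inr s) (Inr x)"
      using s \<open>x \<in> rels G\<close> \<open>x \<noteq> r\<close> by (intro edge_linked_rev) (auto simp: G' edges_def)
    ultimately show ?thesis
      by (rule rtrancl_trans)
  qed
  \<comment> \<open>The owner edge of r is replaced by the path through s, whose reference is now pending at x.\<close>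
  define f :: "'p + 'r \<Rightarrow> 'p + 'r" where "f y = (if y = Inr r then Inr x else y)" for y
  show ?thesis
  proof (rule weakly_connected_transfer[where f = f, OF assms(2)])
    fix a b assume "(a, b) \<in> edges G" "a \<in> vertices G" "b \<in> vertices G"
    then show "linked G' (f a) (f b)"
    proof (cases rule: edgesE)
      case (owner q)
      then show ?thesis
        using owner_x \<open>a \<in> vertices G\<close>
        by (cases "q = r") (auto simp: f_def G' edges_def intro!: edge_linked)
    next
      case (connection q w)
      then show ?thesis
        using no_in[of q] x \<open>b \<in> vertices G\<close>
        by (cases "q = r") (auto simp: f_def G' edges_def intro!: edge_linked)
    next
      case (sink q)
      then show ?thesis
        using x \<open>b \<in> vertices G\<close>
        by (auto simp: f_def G' edges_def intro!: edge_linked)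
    next
      case (pending q w)
      then show ?thesis
        using no_in[of q] \<open>x \<in> rels G\<close> \<open>x \<noteq> r\<close> \<open>b \<in> vertices G\<close>
        by (cases "q = r") (auto simp: f_def G' edges_def intro!: edge_linked)
    qed
  next
    fix c assume "c \<in> vertices G'"
    then have "c \<in> vertices G" "f c = c"
      unfolding G' vertices_def f_def by auto
    then show "\<exists>a\<in>vertices G. linked G' c (f a)"
      by (metis rtrancl_refl)
  qed
qed

lemma reversal_deliver_weakly_connected:
  fixes G G' :: "('p, 'r) rstate"
  assumes "valid G" "weakly_connected G"
    and r: "r \<in> rels G" "own G r = u" and "incoming G r = 0" and "out G r = None"
    and ms: "set (buf G r) \<subseteq> set ms"
    and ns: "distinct ns" "length ns = length ms" "set ns \<inter> rels G = {}"
    and G': "G' = G\<lparr>rels := (rels G - {r}) \<union> set ns,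
                    own := (\<lambda>q. if q \<in> set ns then u else own G q),
                    out := out G ++ map_of (zip ns ms),
                    buf := (\<lambda>q. if q \<in> set ns \<or> q = r then [] else buf G q)\<rparr>"
  shows "weakly_connected G'"
proof -
  note no_in = valid_incoming_0D[OF assms(1) \<open>incoming G r = 0\<close>]
  have "u \<in> procs G"
    using assms(1) r unfolding valid_def by auto
  have fields: "procs G' = procs G" "rels G' = rels G - {r} \<union> set ns"
    "own G' q = (if q \<in> set ns then u else own G q)"
    "buf G' q = (if q \<in> set ns \<or> q = r then [] else buf G q)" for q
    by (simp_all add: G')
  have out_old: "out G' q = out G q" if "q \<notin> set ns" for q
  proof -
    have "map_of (zip ns ms) q = None"
      using that ns(2) by (simp add: map_of_zip_is_None)
    then show ?thesis
      by (simp add: G' map_add_def)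
  qed
  have linked_new: "linked G' (Inl u) (Inr w)" if "w \<in> set ms" "w \<in> rels G" "w \<noteq> r" for w
  proof -
    obtain n where "map_of (zip ns ms) n = Some w"
      using \<open>w \<in> set ms\<close> ran_map_of_zip[OF ns(2,1)] unfolding ran_def by blast
    then have n: "n \<in> set ns" "out G' n = Some w"
      using dom_map_of_zip[OF ns(2)] by (auto simp: G')
    have "n \<in> rels G'" "own G' n = u"
      using n by (simp_all add: G')
    have "Inl u \<in> vertices G'" "Inr n \<in> vertices G'" "Inr w \<in> vertices G'"
      using \<open>u \<in> procs G\<close> \<open>n \<in> rels G'\<close> that by (simp_all add: G')
    then have "linked G' (Inl u) (Inr n)" "linked G' (Inr n) (Inr w)"
      using owner_edge[OF \<open>n \<in> rels G'\<close>] connection_edge[OF \<open>n \<in> rels G'\<close> n(2)]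
      unfolding \<open>own G' n = u\<close> by (simp_all add: edge_linked)
    then show ?thesis
      by (rule rtrancl_trans)
  qed
  \<comment> \<open>The pending references of r now hang off u through the fresh relays.\<close>
  define f :: "'p + 'r \<Rightarrow> 'p + 'r" where "f y = (if y = Inr r then Inl u else y)" for y
  show ?thesis
  proof (rule weakly_connected_transfer[where f = f, OF assms(2)])
    fix a b assume "(a, b) \<in> edges G" "a \<in> vertices G" "b \<in> vertices G"
    then show "linked G' (f a) (f b)"
    proof (cases rule: edgesE)
      case (owner q)
      then show ?thesis
        using r ns(3) \<open>a \<in> vertices G\<close>
        by (cases "q = r") (auto simp: f_def fields out_old edges_def intro!: edge_linked)
    next
      case (connection q w)
      then show ?thesis
        using no_in[of q] \<open>out G r = None\<close> ns(3) \<open>b \<in> vertices G\<close>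
        by (auto simp: f_def fields out_old edges_def intro!: edge_linked)
    next
      case (sink q)
      then show ?thesis
        using r ns(3) \<open>b \<in> vertices G\<close>
        by (cases "q = r") (auto simp: f_def fields out_old edges_def intro!: edge_linked)
    next
      case (pending q w)
      show ?thesis
      proof (cases "q = r")
        case True
        then show ?thesis
          using pending no_in[of q] linked_new ms \<open>b \<in> vertices G\<close> by (auto simp: f_def)
      next
        case False
        then show ?thesis
          using pending no_in[of q] ns(3) \<open>b \<in> vertices G\<close>
          by (auto simp: f_def fields edges_def intro!: edge_linked)
      qed
    qed
  next
    fix c assume c: "c \<in> vertices G'"
    show "\<exists>a\<in>vertices G. linked G' c (f a)"
    proof (cases "c \<in> vertices G")
      case True
      moreover have "f c = c"
        using c r ns(3) by (auto simp: f_def fields)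
      ultimately show ?thesis
        by (metis rtrancl_refl)
    next
      case False
      then obtain n where "c = Inr n" "n \<in> set ns"
        using c by (auto simp: vertices_def fields)
      then have "linked G' c (Inl u)"
        using owner_edge[of n G'] \<open>u \<in> procs G\<close> by (intro edge_linked_rev) (auto simp: fields)
      then show ?thesis
        using r by (auto simp: f_def)
    qed
  qed
qed

lemma reversal_stepE [consumes 1, case_names forward deliver]:
  assumes "reversal_step G G'"
  obtains (forward) r s x where "r \<in> rels G" "s \<in> rels G" "r \<noteq> s" "own G s = own G r"
      "incoming G r = 0" "out G r = Some x"
      "G' = G\<lparr>rels := rels G - {r}, buf := (buf G)(x := buf G x @ (buf G r @ [s]), r := [])\<rparr>"
  | (deliver) r s ns where "r \<in> rels G" "s \<in> rels G" "r \<noteq> s" "own G s = own G r"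
      "incoming G r = 0" "out G r = None"
      "distinct ns" "length ns = length (buf G r @ [s])" "set ns \<inter> rels G = {}"
      "G' = G\<lparr>rels := (rels G - {r}) \<union> set ns,
               own := (\<lambda>q. if q \<in> set ns then own G r else own G q),
               out := out G ++ map_of (zip ns (buf G r @ [s])),
               buf := (\<lambda>q. if q \<in> set ns \<or> q = r then [] else buf G q)\<rparr>"
  using assms unfolding reversal_step_def Let_def
  by (elim exE conjE) (auto split: option.split_asm)

lemma reversal_step_weakly_connected:
  assumes "valid G" "weakly_connected G" "reversal_step G G'"
  shows "weakly_connected G'"
  using assms(3)
proof (cases rule: reversal_stepE)
  case forward
  then show ?thesis
    by (rule reversal_forward_weakly_connected[OF assms(1,2)])
next
  case deliver
  then show ?thesis
    by (intro reversal_deliver_weakly_connected[OF assms(1,2)]) auto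
qed

theorem theorem5:
  fixes G G' :: "('p, 'r) rstate"
  assumes "valid G"
    and "weakly_connected G"
    and "IFR_step G G'"
  shows "weakly_connected G'"
  using assms(3) intro_step_weakly_connected[OF assms(2)]
    fusion_step_weakly_connected[OF assms(1,2)]
    reversal_step_weakly_connected[OF assms(1,2)]
  unfolding IFR_step_def by blast

end
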